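(* Every polyhedral loss $L:\mathbb{R}^d\to\mathbb{R}^{\mathcal{Y}}_+$ embeds some discrete loss.
   Context: $\mathcal{Y}$ is a finite set of labels; $\mathbb{R}^{\mathcal{Y}}_+$ is the nonnegative orthant; $\Delta_{\mathcal{Y}}$ is the probability simplex on $\mathcal{Y}$. A loss is a map $L:\mathcal{R}\to\mathbb{R}^{\mathcal{Y}}_+$; expected loss under $p$ is $\langle p,L(r)\rangle$. A loss is discrete if its report set $\mathcal{R}$ is finite. $L:\mathbb{R}^d\to\mathbb{R}^{\mathcal{Y}}_+$ is polyhedral if each coordinate $u\mapsto L(u)_y$ is a pointwise maximum of finitely many affine functions. $L$ is minimizable if $\inf_r\langle p,L(r)\rangle$ is attained for all $p\in\Delta_{\mathcal{Y}}$; then $\mathrm{prop}[L](p)=\arg\min_r\langle p,L(r)\rangle$. $\mathcal{S}\subseteq\mathcal{R}$ is representative for a minimizable loss $L$ if $\mathrm{prop}[L](p)\cap\mathcal{S}\neq\emptyset$ for all $p$. A minimizable $L:\mathbb{R}^d\to\mathbb{R}^{\mathcal{Y}}_+$ embeds $\ell:\mathcal{R}\to\mathbb{R}^{\mathcal{Y}}_+$ if there exist a representative set $\mathcal{S}$ for $\ell$ and an injective $\varphi:\mathcal{S}\to\mathbb{R}^d$ with (i) $L(\varphi(r))=\ell(r)$ for all $r\in\mathcal{S}$ and (ii) for all $p\in\Delta_{\mathcal{Y}}$, $r\in\mathcal{S}$: $r\in\mathrm{prop}[\ell](p)\iff\varphi(r)\in\mathrm{prop}[L](p)$. *)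

theory Defs
  imports "HOL-Analysis.Analysis"
begin

text \<open>Labels: a finite type 'y. Loss vectors: functions 'y \<Rightarrow> real.
  A loss on a report set R is a map ell :: 'r \<Rightarrow> 'y \<Rightarrow> real, only its values
  on R matter.\<close>

definition prob_simplex :: "('y::finite \<Rightarrow> real) set" where
  "prob_simplex = {p. (\<forall>y. 0 \<le> p y) \<and> (\<Sum>y\<in>UNIV. p y) = 1}"

definition exp_loss :: "('y::finite \<Rightarrow> real) \<Rightarrow> ('y \<Rightarrow> real) \<Rightarrow> real" where
  "exp_loss p v = (\<Sum>y\<in>UNIV. p y * v y)"

definition nonneg_loss_on :: "'r set \<Rightarrow> ('r \<Rightarrow> 'y \<Rightarrow> real) \<Rightarrow> bool" where
  "nonneg_loss_on R L \<longleftrightarrow> (\<forall>r\<in>R. \<forall>y. 0 \<le> L r y)"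

definition minimizable_on :: "'r set \<Rightarrow> ('r \<Rightarrow> 'y::finite \<Rightarrow> real) \<Rightarrow> bool" where
  "minimizable_on R L \<longleftrightarrow>
     (\<forall>p\<in>prob_simplex. \<exists>r\<in>R. \<forall>r'\<in>R. exp_loss p (L r) \<le> exp_loss p (L r'))"

definition prop_on :: "'r set \<Rightarrow> ('r \<Rightarrow> 'y::finite \<Rightarrow> real) \<Rightarrow> ('y \<Rightarrow> real) \<Rightarrow> 'r set" where
  "prop_on R L p = {r\<in>R. \<forall>r'\<in>R. exp_loss p (L r) \<le> exp_loss p (L r')}"

definition representative :: "'r set \<Rightarrow> ('r \<Rightarrow> 'y::finite \<Rightarrow> real) \<Rightarrow> 'r set \<Rightarrow> bool" where
  "representative R L S \<longleftrightarrow> S \<subseteq> R \<and> (\<forall>p\<in>prob_simplex. prop_on R L p \<inter> S \<noteq> {})"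

definition polyhedral :: "(real^'d \<Rightarrow> 'y \<Rightarrow> real) \<Rightarrow> bool" where
  "polyhedral L \<longleftrightarrow> (\<forall>y. \<exists>A :: ((real^'d) \<times> real) set. finite A \<and> A \<noteq> {} \<and>
       (\<forall>u. L u y = Max ((\<lambda>(a,b). a \<bullet> u + b) ` A)))"

definition embeds :: "(real^'d \<Rightarrow> 'y::finite \<Rightarrow> real) \<Rightarrow> 'r set \<Rightarrow> ('r \<Rightarrow> 'y \<Rightarrow> real) \<Rightarrow> bool" where
  "embeds L R ell \<longleftrightarrow>
     minimizable_on UNIV L \<and> minimizable_on R ell \<and>
     (\<exists>S \<phi>. representative R ell S \<and> inj_on \<phi> S \<and>
        (\<forall>r\<in>S. L (\<phi> r) = ell r) \<and>
        (\<forall>p\<in>prob_simplex. \<forall>r\<in>S. r \<in> prop_on R ell p \<longleftrightarrow> \<phi> r \<in> prop_on UNIV L p))"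

end

theory Submission
  imports Defs
begin

(*
  For a fixed
  distribution p, minimizing the expected loss is a linear program over the polyhedral
  epigraph of L, so a minimizer exists. The pieces active at a point sort R^d into finitely
  many cells, and if u is a minimizer then so is every v whose active pieces include those
  of u: near u the loss is affine along the line through v and u, so if v were strictly worse,
  moving from u slightly away from v would be strictly better. Hence one point per cell gives
  a finite representative set of reports, and the restriction of L to it is a discrete loss
  that L embeds.
*)

lemma affine_inner_const_if_bdd_below:
  fixes q :: "'a::real_inner"
  assumes "affine A" "bdd_below (inner q ` A)" "x \<in> A" "y \<in> A"
  shows "q \<bullet> x = q \<bullet> y"
proof (rule ccontr)
  assume neq: "q \<bullet> x \<noteq> q \<bullet> y"
  obtain m where m: "\<And>w. w \<in> A \<Longrightarrow> m \<le> q \<bullet> w"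
    using assms(2) by (auto simp: bdd_below_def)
  define t where "t = (q \<bullet> x - m + 1) / (q \<bullet> x - q \<bullet> y)"
  have "(1 - t) *\<^sub>R x + t *\<^sub>R y \<in> A"
    using assms(1,3,4) by (simp add: affine_alt)
  then have "m \<le> q \<bullet> ((1 - t) *\<^sub>R x + t *\<^sub>R y)" by (rule m)
  also have "\<dots> = q \<bullet> x - t * (q \<bullet> x - q \<bullet> y)"
    by (simp add: algebra_simps)
  also have "t * (q \<bullet> x - q \<bullet> y) = q \<bullet> x - m + 1"
    using neq by (simp add: t_def)
  finally show False by simp
qed

lemma inner_attains_inf_Int_halfspace:
  fixes q a :: "'a::real_inner" and b :: real and K :: "'a set"
  defines "H \<equiv> {x. a \<bullet> x = b}" and "S \<equiv> K \<inter> {x. a \<bullet> x \<le> b}"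
  assumes "convex K"
    and min_K: "K \<noteq> {} \<Longrightarrow> bdd_below (inner q ` K) \<Longrightarrow> \<exists>w\<in>K. \<forall>v\<in>K. q \<bullet> w \<le> q \<bullet> v"
    and min_face: "K \<inter> H \<noteq> {} \<Longrightarrow> bdd_below (inner q ` (K \<inter> H))
                 \<Longrightarrow> \<exists>w\<in>K \<inter> H. \<forall>v\<in>K \<inter> H. q \<bullet> w \<le> q \<bullet> v"
    and S: "S \<noteq> {}" "bdd_below (inner q ` S)"
  shows "\<exists>w\<in>S. \<forall>v\<in>S. q \<bullet> w \<le> q \<bullet> v"
proof -
  obtain m where m: "\<And>w. w \<in> S \<Longrightarrow> m \<le> q \<bullet> w"
    using S(2) by (auto simp: bdd_below_def)
  consider (sublevel_inside) w0 where "w0 \<in> S" "\<And>w. w \<in> K \<Longrightarrow> q \<bullet> w \<le> q \<bullet> w0 \<Longrightarrow> w \<in> S"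
    | (escapes) "\<And>w. w \<in> S \<Longrightarrow> \<exists>w'\<in>K. q \<bullet> w' \<le> q \<bullet> w \<and> w' \<notin> S"
    by metis
  then show ?thesis
  proof cases
    case sublevel_inside
    have "min m (q \<bullet> w0) \<le> q \<bullet> w" if "w \<in> K" for w
      using m sublevel_inside(2)[OF that] by (cases "q \<bullet> w \<le> q \<bullet> w0") (auto simp: min.coboundedI1)
    then have "bdd_below (inner q ` K)" by (rule bdd_belowI2)
    moreover have "w0 \<in> K" using sublevel_inside(1) S_def by blast
    ultimately obtain w where w: "w \<in> K" "\<forall>v\<in>K. q \<bullet> w \<le> q \<bullet> v"
      using min_K by blast
    then have "w \<in> S" using sublevel_inside(2) \<open>w0 \<in> K\<close> by blast
    then show ?thesis using w(2) S_def by blast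
  next
    case escapes
    \<comment> \<open>connectedness moves every point of S onto the face without increasing q\<close>
    have dominated: "\<exists>v\<in>K \<inter> H. q \<bullet> v \<le> q \<bullet> w" if w: "w \<in> S" for w
    proof -
      obtain w' where w': "w' \<in> K" "q \<bullet> w' \<le> q \<bullet> w" "w' \<notin> S"
        using escapes[OF w] by blast
      have "connected (K \<inter> {x. q \<bullet> x \<le> q \<bullet> w})"
        using \<open>convex K\<close> by (intro convex_connected convex_Int convex_halfspace_le)
      moreover have "w \<in> K" "a \<bullet> w \<le> b" using w S_def by auto
      moreover have "b \<le> a \<bullet> w'" using w' S_def by auto
      ultimately obtain v where "v \<in> K \<inter> {x. q \<bullet> x \<le> q \<bullet> w}" "a \<bullet> v = b"
        using connected_ivt_hyperplane[of _ w w' a b] w' by auto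
      then show ?thesis unfolding H_def by blast
    qed
    have "K \<inter> H \<subseteq> S" unfolding S_def H_def by auto
    then have "bdd_below (inner q ` (K \<inter> H))"
      by (rule bdd_below_mono[OF S(2) image_mono])
    moreover have "K \<inter> H \<noteq> {}" using dominated S(1) by blast
    ultimately obtain v where v: "v \<in> K \<inter> H" "\<forall>x\<in>K \<inter> H. q \<bullet> v \<le> q \<bullet> x"
      using min_face by blast
    have "q \<bullet> v \<le> q \<bullet> w" if "w \<in> S" for w
      using dominated[OF that] v(2) by (meson order_trans)
    then show ?thesis using v(1) \<open>K \<inter> H \<subseteq> S\<close> by blast
  qed
qed

lemma affine_Inter_halfspaces_inner_attains_inf:
  fixes q :: "'a::real_inner"
  assumes "finite F" "\<forall>h\<in>F. \<exists>a b. h = {x. a \<bullet> x \<le> b}"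
    and "affine A" "A \<inter> \<Inter>F \<noteq> {}" "bdd_below (inner q ` (A \<inter> \<Inter>F))"
  shows "\<exists>w\<in>A \<inter> \<Inter>F. \<forall>v\<in>A \<inter> \<Inter>F. q \<bullet> w \<le> q \<bullet> v"
  using assms
proof (induction F arbitrary: A rule: finite_induct)
  case empty
  then obtain w where "w \<in> A" by auto
  moreover have "q \<bullet> w \<le> q \<bullet> v" if "v \<in> A" for v
    using affine_inner_const_if_bdd_below[of A q w v] empty.prems \<open>w \<in> A\<close> that by simp
  ultimately show ?case by auto
next
  case (insert h F)
  obtain a b where h: "h = {x. a \<bullet> x \<le> b}" using insert.prems(1) by blast
  have halfspaces: "\<forall>h\<in>F. \<exists>a b. h = {x. a \<bullet> x \<le> b}" using insert.prems(1) by blast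
  have "convex (\<Inter>F)"
    using halfspaces by (metis convex_Inter convex_halfspace_le)
  with affine_imp_convex[OF insert.prems(2)] have "convex (A \<inter> \<Inter>F)"
    by (rule convex_Int)
  moreover have "A \<inter> \<Inter>(insert h F) = (A \<inter> \<Inter>F) \<inter> {x. a \<bullet> x \<le> b}"
    and face: "(A \<inter> \<Inter>F) \<inter> {x. a \<bullet> x = b} = (A \<inter> {x. a \<bullet> x = b}) \<inter> \<Inter>F"
    unfolding h by auto
  moreover have "affine (A \<inter> {x. a \<bullet> x = b})"
    using insert.prems(2) affine_hyperplane by (rule affine_Int)
  ultimately show ?case
    using inner_attains_inf_Int_halfspace[of "A \<inter> \<Inter>F" q a b]
      insert.IH[OF halfspaces] insert.prems(2-4) unfolding face by metis
qed

lemma polyhedron_inner_attains_inf: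
  fixes q :: "'a::euclidean_space"
  assumes "polyhedron S" "S \<noteq> {}" "bdd_below (inner q ` S)"
  shows "\<exists>w\<in>S. \<forall>v\<in>S. q \<bullet> w \<le> q \<bullet> v"
proof -
  obtain F where F: "finite F" "S = \<Inter>F" "\<forall>h\<in>F. \<exists>a b. a \<noteq> 0 \<and> h = {x. a \<bullet> x \<le> b}"
    using assms(1) unfolding polyhedron_def by blast
  then have "\<forall>h\<in>F. \<exists>a b. h = {x. a \<bullet> x \<le> b}" by blast
  from affine_Inter_halfspaces_inner_attains_inf[OF F(1) this affine_UNIV, of q] assms(2,3)
  show ?thesis unfolding F(2) by simp
qed

lemma minimizable_on_iff_prop_on_nonempty:
  "minimizable_on R L \<longleftrightarrow> (\<forall>p\<in>prob_simplex. prop_on R L p \<noteq> {})"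
  by (auto simp: minimizable_on_def prop_on_def)

lemma prop_on_comp:
  "prop_on R (L \<circ> e) p = {r \<in> R. e r \<in> prop_on (e ` R) L p}"
  by (auto simp: prop_on_def)

lemma prop_on_subset:
  assumes "S \<subseteq> X" "prop_on X L p \<inter> S \<noteq> {}"
  shows "prop_on S L p = prop_on X L p \<inter> S"
  using assms by (auto simp: prop_on_def intro: order_trans)

lemma embeds_restriction:
  fixes L :: "real^'d \<Rightarrow> 'y::finite \<Rightarrow> real"
  assumes "inj_on e R" and meets: "\<And>p. p \<in> prob_simplex \<Longrightarrow> prop_on UNIV L p \<inter> e ` R \<noteq> {}"
  shows "embeds L R (L \<circ> e)"
proof -
  have prop_R: "r \<in> prop_on R (L \<circ> e) p \<longleftrightarrow> e r \<in> prop_on UNIV L p"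
    if "p \<in> prob_simplex" "r \<in> R" for p r
    using prop_on_subset[OF subset_UNIV meets[OF that(1)]] that(2)
    by (simp add: prop_on_comp)
  have nonempty: "prop_on R (L \<circ> e) p \<noteq> {}" if "p \<in> prob_simplex" for p
    using meets[OF that] prop_R[OF that] by blast
  then have "minimizable_on R (L \<circ> e)"
    by (simp add: minimizable_on_iff_prop_on_nonempty)
  moreover have "representative R (L \<circ> e) R"
  proof -
    have "prop_on R (L \<circ> e) p \<subseteq> R" for p by (auto simp: prop_on_def)
    then show ?thesis using nonempty by (simp add: representative_def Int_absorb2)
  qed
  moreover have "minimizable_on UNIV L"
    using meets by (auto simp: minimizable_on_iff_prop_on_nonempty)
  ultimately show ?thesis
    unfolding embeds_def using assms(1) prop_R by auto
qed

lemma finite_range_representatives: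
  assumes "finite (range f)"
  obtains U where "finite U" "f ` U = range f"
proof
  show "finite ((\<lambda>z. SOME x. f x = z) ` range f)" using assms by simp
  have "(\<lambda>z. f (SOME x. f x = z)) ` range f = (\<lambda>z. z) ` range f"
    by (rule image_cong) (auto intro: someI)
  then show "f ` (\<lambda>z. SOME x. f x = z) ` range f = range f"
    by (simp add: image_image)
qed

definition max_affine :: "('a::real_inner \<times> real) set \<Rightarrow> 'a \<Rightarrow> real" where
  "max_affine P u = Max ((\<lambda>(a, b). a \<bullet> u + b) ` P)"

definition active_pieces :: "('a::real_inner \<times> real) set \<Rightarrow> 'a \<Rightarrow> ('a \<times> real) set" where
  "active_pieces P u = {(a, b) \<in> P. a \<bullet> u + b = max_affine P u}"

lemma max_affine_le_iff:
  assumes "finite P" "P \<noteq> {}"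
  shows "max_affine P u \<le> t \<longleftrightarrow> (\<forall>(a, b)\<in>P. a \<bullet> u + b \<le> t)"
  using assms by (auto simp: max_affine_def)

lemma max_affine_ge:
  assumes "finite P" "(a, b) \<in> P"
  shows "a \<bullet> u + b \<le> max_affine P u"
  unfolding max_affine_def using assms by (intro Max_ge) auto

lemma active_pieces_nonempty:
  assumes "finite P" "P \<noteq> {}"
  shows "active_pieces P u \<noteq> {}"
proof -
  have "max_affine P u \<in> (\<lambda>(a, b). a \<bullet> u + b) ` P"
    unfolding max_affine_def using assms by (intro Max_in) auto
  then obtain a b where "(a, b) \<in> P" "max_affine P u = a \<bullet> u + b" by auto
  then have "(a, b) \<in> active_pieces P u" by (simp add: active_pieces_def)
  then show ?thesis by blast
qed

lemma max_affine_extrapolate: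
  fixes u v :: "'a::real_inner"
  assumes "finite P" "P \<noteq> {}" "active_pieces P u \<subseteq> active_pieces P v"
  shows "\<forall>\<^sub>F t in at_right 0.
           max_affine P (u + t *\<^sub>R (u - v)) = (1 + t) * max_affine P u - t * max_affine P v"
proof -
  define M where "M t = (1 + t) * max_affine P u - t * max_affine P v" for t
  define slack where "slack x a b = max_affine P x - (a \<bullet> x + b)" for x a b
  have piece: "a \<bullet> (u + t *\<^sub>R (u - v)) + b = M t - ((1 + t) * slack u a b - t * slack v a b)"
    for a b t
    by (simp add: M_def slack_def algebra_simps)
  have active: "slack u a b = 0" "slack v a b = 0" if "(a, b) \<in> active_pieces P u" for a b
    using that assms(3) by (auto simp: slack_def active_pieces_def)
  have below: "\<forall>\<^sub>F t in at_right 0. a \<bullet> (u + t *\<^sub>R (u - v)) + b \<le> M t" if "(a, b) \<in> P" for a b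
  proof (cases "(a, b) \<in> active_pieces P u")
    case True
    then show ?thesis by (simp add: piece active)
  next
    case False
    then have "0 < slack u a b"
      using that max_affine_ge[OF assms(1) that, of u] by (auto simp: slack_def active_pieces_def)
    moreover have "((\<lambda>t. (1 + t) * slack u a b - t * slack v a b)
        \<longlongrightarrow> (1 + 0) * slack u a b - 0 * slack v a b) (at_right 0)"
      by (intro tendsto_intros)
    ultimately have "\<forall>\<^sub>F t in at_right 0. 0 < (1 + t) * slack u a b - t * slack v a b"
      by (intro order_tendstoD(1)) simp_all
    then show ?thesis by eventually_elim (simp add: piece)
  qed
  have "\<forall>\<^sub>F t in at_right 0. \<forall>ab\<in>P. fst ab \<bullet> (u + t *\<^sub>R (u - v)) + snd ab \<le> M t"
    using below by (intro eventually_ball_finite[OF assms(1)] ballI) auto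
  then show ?thesis
  proof eventually_elim
    case (elim t)
    obtain a b where ab: "(a, b) \<in> active_pieces P u"
      using active_pieces_nonempty[OF assms(1,2), of u] by (metis all_not_in_conv prod.exhaust)
    then have "(a, b) \<in> P" by (simp add: active_pieces_def)
    then have "M t \<le> max_affine P (u + t *\<^sub>R (u - v))"
      using max_affine_ge[OF assms(1)] by (metis piece active[OF ab] diff_zero mult_zero_right)
    moreover have "max_affine P (u + t *\<^sub>R (u - v)) \<le> M t"
      using elim max_affine_le_iff[OF assms(1,2)] by auto
    ultimately show ?case unfolding M_def by linarith
  qed
qed

lemma prop_on_UNIV_if_active_pieces_subset:
  fixes L :: "'a::real_inner \<Rightarrow> 'y::finite \<Rightarrow> real"
  assumes pieces: "\<And>y. finite (A y)" "\<And>y. A y \<noteq> {}" "\<And>u y. L u y = max_affine (A y) u"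
    and "u \<in> prop_on UNIV L p" "\<And>y. active_pieces (A y) u \<subseteq> active_pieces (A y) v"
  shows "v \<in> prop_on UNIV L p"
proof -
  have "\<forall>\<^sub>F t in at_right 0. \<forall>y.
          L (u + t *\<^sub>R (u - v)) y = (1 + t) * L u y - t * L v y"
    unfolding pieces(3) using pieces(1,2) assms(5)
    by (intro eventually_all_finite max_affine_extrapolate)
  with eventually_at_right_less have "\<forall>\<^sub>F t in at_right 0. 0 < t \<and> (\<forall>y.
          L (u + t *\<^sub>R (u - v)) y = (1 + t) * L u y - t * L v y)"
    by (rule eventually_conj)
  then obtain t where "0 < t" and t: "\<And>y. L (u + t *\<^sub>R (u - v)) y = (1 + t) * L u y - t * L v y"
    using eventually_happens'[OF trivial_limit_at_right_real] by blast
  have "exp_loss p (L u) \<le> exp_loss p (L (u + t *\<^sub>R (u - v)))"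
    using assms(4) by (simp add: prop_on_def)
  also have "\<dots> = (1 + t) * exp_loss p (L u) - t * exp_loss p (L v)"
    unfolding exp_loss_def t by (simp add: algebra_simps sum_subtractf sum_distrib_left sum.distrib)
  finally have "exp_loss p (L v) \<le> exp_loss p (L u)"
    using \<open>0 < t\<close> by (simp add: algebra_simps)
  then show ?thesis
    using assms(4) by (auto simp: prop_on_def intro: order_trans)
qed

lemma polyhedron_epigraph_max_affine:
  fixes A :: "'y::finite \<Rightarrow> ('a::euclidean_space \<times> real) set"
  assumes "\<And>y. finite (A y)" "\<And>y. A y \<noteq> {}"
  shows "polyhedron {w :: 'a \<times> (real^'y). \<forall>y. max_affine (A y) (fst w) \<le> snd w $ y}"
proof -
  have halfspace: "polyhedron {w :: 'a \<times> (real^'y). a \<bullet> fst w + b \<le> snd w $ y}" for a b y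
  proof -
    have "{w :: 'a \<times> (real^'y). a \<bullet> fst w + b \<le> snd w $ y} = {w. (a, - axis y 1) \<bullet> w \<le> - b}"
    proof (intro Collect_cong)
      fix w :: "'a \<times> (real^'y)"
      show "a \<bullet> fst w + b \<le> snd w $ y \<longleftrightarrow> (a, - axis y 1) \<bullet> w \<le> - b"
        by (cases w) (auto simp: inner_axis')
    qed
    then show ?thesis by (simp add: polyhedron_halfspace_le)
  qed
  have epigraph: "{w :: 'a \<times> (real^'y). \<forall>y. max_affine (A y) (fst w) \<le> snd w $ y}
      = (\<Inter>y. \<Inter>(a, b)\<in>A y. {w. a \<bullet> fst w + b \<le> snd w $ y})"
    by (simp add: set_eq_iff max_affine_le_iff[OF assms] split_beta)
  have pieces: "polyhedron (\<Inter>(a, b)\<in>A y. {w :: 'a \<times> (real^'y). a \<bullet> fst w + b \<le> snd w $ y})" for y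
    by (rule polyhedron_Inter) (use assms(1) halfspace in auto)
  have "polyhedron (\<Inter>y. \<Inter>(a, b)\<in>A y. {w :: 'a \<times> (real^'y). a \<bullet> fst w + b \<le> snd w $ y})"
    by (rule polyhedron_Inter) (use pieces in auto)
  then show ?thesis unfolding epigraph .
qed

lemma max_affine_loss_minimizable:
  fixes L :: "'a::euclidean_space \<Rightarrow> 'y::finite \<Rightarrow> real"
  assumes pieces: "\<And>y. finite (A y)" "\<And>y. A y \<noteq> {}" "\<And>u y. L u y = max_affine (A y) u"
    and "nonneg_loss_on UNIV L"
  shows "minimizable_on UNIV L"
  unfolding minimizable_on_def
proof
  fix p :: "'y \<Rightarrow> real" assume "p \<in> prob_simplex"
  then have p: "\<And>y. 0 \<le> p y" by (simp add: prob_simplex_def)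
  define E where "E = {w :: 'a \<times> (real^'y). \<forall>y. L (fst w) y \<le> snd w $ y}"
  define q where "q = (0 :: 'a, \<chi> y. p y)"
  define graph where "graph u = (u, \<chi> y. L u y)" for u
  have q: "q \<bullet> w = (\<Sum>y\<in>UNIV. p y * snd w $ y)" for w
    by (cases w) (simp add: q_def inner_vec_def mult.commute)
  have graph: "graph u \<in> E" "q \<bullet> graph u = exp_loss p (L u)" for u
    by (simp_all add: E_def graph_def q exp_loss_def)
  have E_above: "exp_loss p (L (fst w)) \<le> q \<bullet> w" if "w \<in> E" for w
    using that p unfolding E_def q exp_loss_def by (auto intro: sum_mono mult_left_mono)
  have "0 \<le> exp_loss p (L u)" for u
    using assms(4) p unfolding nonneg_loss_on_def exp_loss_def by (simp add: sum_nonneg)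
  then have "0 \<le> q \<bullet> w" if "w \<in> E" for w
    using E_above[OF that] by (meson order_trans)
  then have "bdd_below (inner q ` E)" by (rule bdd_belowI2)
  moreover have "polyhedron E"
    unfolding E_def pieces(3) using pieces(1,2) by (rule polyhedron_epigraph_max_affine)
  moreover have "E \<noteq> {}" using graph by blast
  ultimately obtain w where "w \<in> E" and w: "\<And>v. v \<in> E \<Longrightarrow> q \<bullet> w \<le> q \<bullet> v"
    using polyhedron_inner_attains_inf[of E q] by blast
  have "exp_loss p (L (fst w)) \<le> exp_loss p (L u)" for u
    using E_above[OF \<open>w \<in> E\<close>] w[OF graph(1)[of u]] graph(2)[of u] by linarith
  then show "\<exists>r\<in>UNIV. \<forall>r'\<in>UNIV. exp_loss p (L r) \<le> exp_loss p (L r')" by blast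
qed

lemma max_affine_loss_finite_representatives:
  fixes L :: "'a::euclidean_space \<Rightarrow> 'y::finite \<Rightarrow> real"
  assumes pieces: "\<And>y. finite (A y)" "\<And>y. A y \<noteq> {}" "\<And>u y. L u y = max_affine (A y) u"
    and "nonneg_loss_on UNIV L"
  obtains U where "finite U" "U \<noteq> {}" "\<And>p. p \<in> prob_simplex \<Longrightarrow> prop_on UNIV L p \<inter> U \<noteq> {}"
proof -
  define pattern where "pattern u = (\<lambda>y. active_pieces (A y) u)" for u
  have "range pattern \<subseteq> PiE UNIV (\<lambda>y. Pow (A y))"
    by (auto simp: pattern_def active_pieces_def)
  then have "finite (range pattern)"
    using pieces(1) by (intro finite_subset[OF _ finite_PiE]) auto
  then obtain U where "finite U" and U: "pattern ` U = range pattern"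
    by (rule finite_range_representatives)
  have "prop_on UNIV L p \<inter> U \<noteq> {}" if "p \<in> prob_simplex" for p
  proof -
    have "prop_on UNIV L p \<noteq> {}"
      using max_affine_loss_minimizable[OF pieces assms(4)] that
      by (simp add: minimizable_on_iff_prop_on_nonempty)
    then obtain u where u: "u \<in> prop_on UNIV L p" by blast
    obtain v where "v \<in> U" "pattern v = pattern u" using U by (metis imageE rangeI)
    then have "v \<in> prop_on UNIV L p"
      using prop_on_UNIV_if_active_pieces_subset[OF pieces u] by (metis order_refl pattern_def)
    then show ?thesis using \<open>v \<in> U\<close> by blast
  qed
  moreover have "U \<noteq> {}" using U by blast
  ultimately show ?thesis using \<open>finite U\<close> that by blast
qed

theorem theorem3:
  fixes L :: "real^'d \<Rightarrow> 'y::finite \<Rightarrow> real"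
  assumes "nonneg_loss_on UNIV L"
    and "polyhedral L"
  shows "\<exists>(R :: nat set) (ell :: nat \<Rightarrow> 'y \<Rightarrow> real).
           finite R \<and> R \<noteq> {} \<and> nonneg_loss_on R ell \<and> embeds L R ell"
proof -
  obtain A :: "'y \<Rightarrow> ((real^'d) \<times> real) set"
    where pieces: "\<And>y. finite (A y)" "\<And>y. A y \<noteq> {}" "\<And>u y. L u y = max_affine (A y) u"
    using assms(2) unfolding polyhedral_def max_affine_def by metis
  obtain U where "finite U" "U \<noteq> {}"
    and meets: "\<And>p. p \<in> prob_simplex \<Longrightarrow> prop_on UNIV L p \<inter> U \<noteq> {}"
    using max_affine_loss_finite_representatives[OF pieces assms(1)] by blast
  obtain e where e: "bij_betw e {0..<card U} U"
    using ex_bij_betw_nat_finite[OF \<open>finite U\<close>] by blast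
  have "{0..<card U} \<noteq> {}" using \<open>finite U\<close> \<open>U \<noteq> {}\<close> by (simp add: card_gt_0_iff)
  moreover have "embeds L {0..<card U} (L \<circ> e)"
    using e meets by (intro embeds_restriction) (auto simp: bij_betw_def)
  moreover have "nonneg_loss_on {0..<card U} (L \<circ> e)"
    using assms(1) by (simp add: nonneg_loss_on_def)
  ultimately show ?thesis by blast
qed

end
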